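(* Let $[\mathbf v,d]=[v_{11},v_{12},v_{21},v_{22},d]$ with $\mathbf v_1=(v_{11},v_{12})\neq0$, $\mathbf v_2=(v_{21},v_{22})\neq0$ and $d\neq0$. If the following three conditions all hold: (1) $v_{11}^2+v_{12}^2\neq0$ and $v_{21}^2+v_{22}^2\neq0$; (2) $v_{21}\neq0$ or $v_{11}^2-d^2\neq0$; (3) $v_{11}\neq0$ or $v_{21}^2-d^2\neq0$; then neither $L_1$ nor $L_2$ is a polynomial factor of $h$. Moreover, if any one of the conditions (1), (2), (3) fails, then $L_1$ or $L_2$ is a polynomial factor of $h$.
   Context: In variables $u,y_1,y_2$: $L_1=v_{11}(u-y_1)-v_{12}y_2$, $L_2=-v_{21}(u+y_1)-v_{22}y_2$, $f_1=(u-y_1)^2+y_2^2$, $f_2=(u+y_1)^2+y_2^2$, and $h=(L_2^2f_1+L_1^2f_2-d^2f_1f_2)^2-4L_1^2L_2^2f_1f_2$, a homogeneous polynomial of degree $8$. Parameters are complex numbers. *)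

theory Defs
  imports Complex_Main "HOL-Computational_Algebra.Polynomial"
begin

text \<open>The polynomial ring C[u,y1,y2] is modelled as the iterated univariate
polynomial ring ((C[u])[y1])[y2], i.e. the type complex poly poly poly.
Divisibility (polynomial factor) is the ring divisibility dvd of this ring.\<close>

type_synonym mpoly3 = "complex poly poly poly"

definition cst :: "complex \<Rightarrow> mpoly3" where
  "cst c = [:[:[:c:]:]:]"

definition varU :: mpoly3 where
  "varU = [:[:[:0, 1:]:]:]"

definition varY1 :: mpoly3 where
  "varY1 = [:[:0, 1:]:]"

definition varY2 :: mpoly3 where
  "varY2 = [:0, 1:]"

definition polyL1 :: "complex \<Rightarrow> complex \<Rightarrow> mpoly3" where
  "polyL1 v11 v12 = cst v11 * (varU - varY1) - cst v12 * varY2"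

definition polyL2 :: "complex \<Rightarrow> complex \<Rightarrow> mpoly3" where
  "polyL2 v21 v22 = - (cst v21 * (varU + varY1)) - cst v22 * varY2"

definition polyf1 :: mpoly3 where
  "polyf1 = (varU - varY1)^2 + varY2^2"

definition polyf2 :: mpoly3 where
  "polyf2 = (varU + varY1)^2 + varY2^2"

definition polyh :: "complex \<Rightarrow> complex \<Rightarrow> complex \<Rightarrow> complex \<Rightarrow> complex \<Rightarrow> mpoly3" where
  "polyh v11 v12 v21 v22 d =
     (let L1 = polyL1 v11 v12; L2 = polyL2 v21 v22 in
      (L2^2 * polyf1 + L1^2 * polyf2 - cst (d^2) * polyf1 * polyf2)^2
        - cst 4 * L1^2 * L2^2 * polyf1 * polyf2)"

end

theory Submission
  imports Defs
begin

text \<open>We have \<open>h = h_form L1 L2 f1 f2 d\<^sup>2\<close>, and modulo \<open>l1\<^sup>2\<close> the form \<open>h_form l1 l2 f1 f2 D\<close>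
  is \<open>(f1 (l2\<^sup>2 - D f2))\<^sup>2\<close>. Hence \<open>L1\<close> divides \<open>h\<close> as soon as it divides \<open>f1\<close> (which happens iff
  \<open>v11\<^sup>2 + v12\<^sup>2 = 0\<close>) or \<open>L2\<^sup>2 - d\<^sup>2 f2\<close> (e.g. if \<open>v11 = 0\<close> and \<open>v21\<^sup>2 = d\<^sup>2\<close>). Conversely,
  on the plane \<open>L1 = 0\<close>, parametrised by \<open>u - y1 = v12\<close>, \<open>y2 = v11\<close>, \<open>u + y1 = b\<close>, the
  polynomial \<open>f1\<close> is the constant \<open>v11\<^sup>2 + v12\<^sup>2\<close> and \<open>L2\<^sup>2 - d\<^sup>2 f2\<close> is a quadratic in \<open>b\<close>
  that vanishes identically only if \<open>v11 = 0\<close> and \<open>v21\<^sup>2 = d\<^sup>2\<close>; otherwise \<open>h\<close> does not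
  vanish on that plane, so \<open>L1\<close> cannot divide it. The reflection \<open>y1 \<mapsto> -y1\<close>, combined
  with replacing \<open>(v11, v12, v21, v22)\<close> by \<open>(v21, -v22, v11, -v12)\<close>, exchanges \<open>L1\<close> and \<open>L2\<close>
  up to sign and leaves \<open>h\<close> invariant.\<close>

text \<open>With \<open>D = d\<^sup>2\<close>, \<open>h_form l1 l2 f1 f2 D\<close> is the product of
  \<open>l1 \<surd>f2 \<plusminus> l2 \<surd>f1 \<plusminus> d \<surd>(f1 f2)\<close> over the four sign choices.\<close>

definition h_form :: "'a::comm_ring_1 \<Rightarrow> 'a \<Rightarrow> 'a \<Rightarrow> 'a \<Rightarrow> 'a \<Rightarrow> 'a" where
  "h_form l1 l2 f1 f2 D = (l2^2 * f1 + l1^2 * f2 - D * f1 * f2)^2 - 4 * l1^2 * l2^2 * f1 * f2"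

lemma h_form_swap: "h_form l1 l2 f1 f2 D = h_form l2 l1 f2 f1 D"
  unfolding h_form_def by (simp add: ac_simps)

lemma h_form_uminus: "h_form (- l1) (- l2) f1 f2 D = h_form l1 l2 f1 f2 D"
  unfolding h_form_def by simp

lemma h_form_0_left: "h_form 0 l2 f1 f2 D = (f1 * (l2^2 - D * f2))^2"
  unfolding h_form_def by (simp add: algebra_simps)

lemma dvd_h_form_if_dvd:
  fixes x l2 f1 f2 D :: "'a::comm_ring_1"
  assumes "x dvd f1 * (l2^2 - D * f2)"
  shows "x dvd h_form x l2 f1 f2 D"
proof -
  have "h_form x l2 f1 f2 D =
        (f1 * (l2^2 - D * f2))^2 + x * (x * (2 * f1 * (l2^2 - D * f2) * f2 + x^2 * f2^2 - 4 * l2^2 * f1 * f2))"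
    unfolding h_form_def by (simp add: power2_eq_square algebra_simps)
  with assms show ?thesis
    by (simp add: power2_eq_square)
qed

lemma linear_form_dvd_sum_of_squares:
  fixes a b X Y :: "'a::comm_ring_1"
  assumes "a dvd 1" and "a^2 + b^2 = 0"
  shows "a * X - b * Y dvd X^2 + Y^2"
proof -
  obtain a' where "1 = a * a'"
    using assms(1) by (rule dvdE)
  have "(a * X - b * Y) * (a'^2 * (a * X + b * Y)) = a'^2 * (a^2 * X^2 - b^2 * Y^2)"
    by (simp add: power2_eq_square algebra_simps)
  also have "\<dots> = (a * a')^2 * (X^2 + Y^2)"
    using assms(2) by (simp add: eq_neg_iff_add_eq_0[symmetric] power_mult_distrib algebra_simps)
  also have "\<dots> = X^2 + Y^2"
    by (simp flip: \<open>1 = a * a'\<close>)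
  finally show ?thesis
    by (metis dvdI)
qed

lemma dvd_square_minus_sum_of_squares:
  fixes a b X Y :: "'a::comm_ring_1"
  shows "Y dvd (a * X + b * Y)^2 - a^2 * (X^2 + Y^2)"
proof
  show "(a * X + b * Y)^2 - a^2 * (X^2 + Y^2) = Y * (2 * a * b * X + (b^2 - a^2) * Y)"
    by (simp add: power2_eq_square algebra_simps)
qed

lemma cst_add: "cst (a + b) = cst a + cst b"
  by (simp add: cst_def)

lemma cst_mult: "cst (a * b) = cst a * cst b"
  by (simp add: cst_def)

lemma cst_minus: "cst (- a) = - cst a"
  by (simp add: cst_def)

lemma cst_0: "cst 0 = 0"
  by (simp add: cst_def)

lemma cst_power: "cst (a ^ n) = cst a ^ n"
  by (induction n) (simp_all add: cst_mult, simp add: cst_def one_pCons)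

lemma is_unit_cst_iff: "cst c dvd 1 \<longleftrightarrow> c \<noteq> 0"
  by (simp add: cst_def is_unit_const_poly_iff dvd_field_iff)

lemma polyh_eq_h_form:
  "polyh v11 v12 v21 v22 d = h_form (polyL1 v11 v12) (polyL2 v21 v22) polyf1 polyf2 (cst (d^2))"
  by (simp add: polyh_def h_form_def Let_def cst_def numeral_poly)

lemma polyL2_eq_uminus:
  "polyL2 v21 v22 = - (cst v21 * (varU + varY1) + cst v22 * varY2)"
  by (simp add: polyL2_def)

lemma polyL1_dvd_polyf1:
  assumes "(v11, v12) \<noteq> (0, 0)" and "v11^2 + v12^2 = 0"
  shows "polyL1 v11 v12 dvd polyf1"
proof -
  have "v11 \<noteq> 0"
    using assms by auto
  moreover have "cst v11 ^ 2 + cst v12 ^ 2 = 0"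
    using assms(2) by (simp flip: cst_power cst_add add: cst_0)
  ultimately show ?thesis
    unfolding polyL1_def polyf1_def
    by (intro linear_form_dvd_sum_of_squares) (simp_all add: is_unit_cst_iff)
qed

lemma polyL2_dvd_polyf2:
  assumes "(v21, v22) \<noteq> (0, 0)" and "v21^2 + v22^2 = 0"
  shows "polyL2 v21 v22 dvd polyf2"
proof -
  have "v21 \<noteq> 0"
    using assms by auto
  moreover have "cst v21 ^ 2 + cst (- v22) ^ 2 = 0"
    using assms(2) by (simp flip: cst_power cst_add add: cst_0)
  ultimately have "cst v21 * (varU + varY1) - cst (- v22) * varY2 dvd polyf2"
    unfolding polyf2_def
    by (intro linear_form_dvd_sum_of_squares) (simp_all add: is_unit_cst_iff)
  then show ?thesis
    unfolding polyL2_eq_uminus minus_dvd_iff by (simp add: cst_minus)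
qed

lemma polyL1_dvd_polyL2_sq_diff:
  assumes "v11 = 0" and "v12 \<noteq> 0" and "v21^2 = d^2"
  shows "polyL1 v11 v12 dvd polyL2 v21 v22^2 - cst (d^2) * polyf2"
proof -
  have "polyL1 v11 v12 = cst (- v12) * varY2"
    using assms(1) by (simp add: polyL1_def cst_minus cst_0)
  moreover have "cst (d^2) = cst v21 ^ 2"
    using assms(3) by (simp flip: cst_power)
  moreover have "varY2 dvd (cst v21 * (varU + varY1) + cst v22 * varY2)^2 - cst v21^2 * polyf2"
    unfolding polyf2_def by (rule dvd_square_minus_sum_of_squares)
  ultimately show ?thesis
    using assms(2) unfolding polyL2_eq_uminus power2_minus
    by (simp add: is_unit_cst_iff mult_unit_dvd_iff')
qed

lemma polyL2_dvd_polyL1_sq_diff: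
  assumes "v21 = 0" and "v22 \<noteq> 0" and "v11^2 = d^2"
  shows "polyL2 v21 v22 dvd polyL1 v11 v12^2 - cst (d^2) * polyf1"
proof -
  have "polyL2 v21 v22 = cst (- v22) * varY2"
    using assms(1) by (simp add: polyL2_def cst_minus cst_0)
  moreover have "cst (d^2) = cst v11 ^ 2"
    using assms(3) by (simp flip: cst_power)
  moreover have "varY2 dvd (cst v11 * (varU - varY1) + cst (- v12) * varY2)^2 - cst v11^2 * polyf1"
    unfolding polyf1_def by (rule dvd_square_minus_sum_of_squares)
  ultimately show ?thesis
    using assms(2) by (simp add: polyL1_def cst_minus is_unit_cst_iff mult_unit_dvd_iff')
qed

definition eval3 :: "complex \<Rightarrow> complex \<Rightarrow> complex \<Rightarrow> mpoly3 \<Rightarrow> complex" where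
  "eval3 u y1 y2 p = poly (poly (poly p [:[:y2:]:]) [:y1:]) u"

lemma eval3_simps [simp]:
  "eval3 u y1 y2 (p * q) = eval3 u y1 y2 p * eval3 u y1 y2 q"
  "eval3 u y1 y2 (p + q) = eval3 u y1 y2 p + eval3 u y1 y2 q"
  "eval3 u y1 y2 (p - q) = eval3 u y1 y2 p - eval3 u y1 y2 q"
  "eval3 u y1 y2 (- p) = - eval3 u y1 y2 p"
  "eval3 u y1 y2 (p ^ n) = eval3 u y1 y2 p ^ n"
  "eval3 u y1 y2 (cst c) = c"
  "eval3 u y1 y2 varU = u"
  "eval3 u y1 y2 varY1 = y1"
  "eval3 u y1 y2 varY2 = y2"
  by (simp_all add: eval3_def cst_def varU_def varY1_def varY2_def)

lemma eval3_eq_0_if_dvd: "p dvd q \<Longrightarrow> eval3 u y1 y2 p = 0 \<Longrightarrow> eval3 u y1 y2 q = 0"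
  by (auto elim: dvdE)

lemma eval3_h_form:
  "eval3 u y1 y2 (h_form l1 l2 f1 f2 D) =
     h_form (eval3 u y1 y2 l1) (eval3 u y1 y2 l2) (eval3 u y1 y2 f1) (eval3 u y1 y2 f2) (eval3 u y1 y2 D)"
  by (simp add: h_form_def eval3_def numeral_poly)

lemma eval3_polyL1: "eval3 u y1 y2 (polyL1 v11 v12) = v11 * (u - y1) - v12 * y2"
  by (simp add: polyL1_def)

lemma eval3_polyL2: "eval3 u y1 y2 (polyL2 v21 v22) = - (v21 * (u + y1)) - v22 * y2"
  by (simp add: polyL2_def)

lemma eval3_polyf1: "eval3 u y1 y2 polyf1 = (u - y1)^2 + y2^2"
  by (simp add: polyf1_def)

lemma eval3_polyf2: "eval3 u y1 y2 polyf2 = (u + y1)^2 + y2^2"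
  by (simp add: polyf2_def)

lemma eval3_reflect_simps:
  "eval3 u (- y1) y2 (polyL1 v11 v12) = - eval3 u y1 y2 (polyL2 v11 (- v12))"
  "eval3 u (- y1) y2 (polyL2 v21 v22) = - eval3 u y1 y2 (polyL1 v21 (- v22))"
  "eval3 u (- y1) y2 polyf1 = eval3 u y1 y2 polyf2"
  "eval3 u (- y1) y2 polyf2 = eval3 u y1 y2 polyf1"
  by (simp_all add: eval3_polyL1 eval3_polyL2 eval3_polyf1 eval3_polyf2 algebra_simps)

lemma eval3_polyh_reflect:
  "eval3 u (- y1) y2 (polyh v11 v12 v21 v22 d) = eval3 u y1 y2 (polyh v21 (- v22) v11 (- v12) d)"
  unfolding polyh_eq_h_form eval3_h_form eval3_reflect_simps h_form_uminus eval3_simps(6)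
  by (rule h_form_swap)

lemma polyh_nonzero_on_zero_set_of_polyL1:
  assumes "d \<noteq> 0" and "v11^2 + v12^2 \<noteq> 0" and "v11 \<noteq> 0 \<or> v21^2 \<noteq> d^2"
  obtains u y1 y2 where "eval3 u y1 y2 (polyL1 v11 v12) = 0"
    and "eval3 u y1 y2 (polyh v11 v12 v21 v22 d) \<noteq> 0"
proof -
  define Q where "Q = [:v11^2 * (v22^2 - d^2), 2 * v11 * v21 * v22, v21^2 - d^2:]"
  have "Q \<noteq> 0"
  proof
    assume "Q = 0"
    then have A: "v21^2 = d^2" and B: "v11 * v21 * v22 = 0" and C: "v11^2 * (v22^2 - d^2) = 0"
      by (simp_all add: Q_def)
    have "v21 \<noteq> 0"
      using A assms(1) by auto
    moreover have "v11 \<noteq> 0"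
      using A assms(3) by auto
    ultimately have "v22 = 0"
      using B by simp
    with C \<open>v11 \<noteq> 0\<close> assms(1) show False
      by simp
  qed
  then obtain b where b: "poly Q b \<noteq> 0"
    using poly_all_0_iff_0 by blast
  define u y1 where "u = (v12 + b) / 2" and "y1 = (b - v12) / 2"
  have uy1: "u - y1 = v12" "u + y1 = b"
    by (simp_all add: u_def y1_def field_simps)
  have L1: "eval3 u y1 v11 (polyL1 v11 v12) = 0"
    by (simp add: eval3_polyL1 uy1)
  have "eval3 u y1 v11 (polyh v11 v12 v21 v22 d) =
        ((v12^2 + v11^2) * ((- (v21 * b) - v22 * v11)^2 - d^2 * (b^2 + v11^2)))^2"
    unfolding polyh_eq_h_form eval3_h_form L1 h_form_0_left
      eval3_polyL2 eval3_polyf1 eval3_polyf2 uy1 by simp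
  also have "\<dots> = ((v11^2 + v12^2) * poly Q b)^2"
    by (simp add: Q_def power2_eq_square algebra_simps)
  finally show ?thesis
    using that L1 b assms(2) by simp
qed

lemma polyL1_dvd_polyh_iff:
  assumes "(v11, v12) \<noteq> (0, 0)" and "d \<noteq> 0"
  shows "polyL1 v11 v12 dvd polyh v11 v12 v21 v22 d \<longleftrightarrow> v11^2 + v12^2 = 0 \<or> (v11 = 0 \<and> v21^2 = d^2)"
proof
  assume "polyL1 v11 v12 dvd polyh v11 v12 v21 v22 d"
  then show "v11^2 + v12^2 = 0 \<or> (v11 = 0 \<and> v21^2 = d^2)"
    using polyh_nonzero_on_zero_set_of_polyL1 eval3_eq_0_if_dvd assms(2) by metis
next
  assume "v11^2 + v12^2 = 0 \<or> (v11 = 0 \<and> v21^2 = d^2)"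
  then have "polyL1 v11 v12 dvd polyf1 * (polyL2 v21 v22^2 - cst (d^2) * polyf2)"
    using polyL1_dvd_polyf1 polyL1_dvd_polyL2_sq_diff assms(1) by fastforce
  then show "polyL1 v11 v12 dvd polyh v11 v12 v21 v22 d"
    unfolding polyh_eq_h_form by (rule dvd_h_form_if_dvd)
qed

lemma polyL2_dvd_polyh_iff:
  assumes "(v21, v22) \<noteq> (0, 0)" and "d \<noteq> 0"
  shows "polyL2 v21 v22 dvd polyh v11 v12 v21 v22 d \<longleftrightarrow> v21^2 + v22^2 = 0 \<or> (v21 = 0 \<and> v11^2 = d^2)"
proof
  assume dvd: "polyL2 v21 v22 dvd polyh v11 v12 v21 v22 d"
  show "v21^2 + v22^2 = 0 \<or> (v21 = 0 \<and> v11^2 = d^2)"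
  proof (rule ccontr)
    assume "\<not> ?thesis"
    then obtain u y1 y2 where "eval3 u y1 y2 (polyL1 v21 (- v22)) = 0"
      and "eval3 u y1 y2 (polyh v21 (- v22) v11 (- v12) d) \<noteq> 0"
      using polyh_nonzero_on_zero_set_of_polyL1[of d v21 "- v22" v11 "- v12"] assms(2) by auto
    then have "eval3 u (- y1) y2 (polyL2 v21 v22) = 0"
      and "eval3 u (- y1) y2 (polyh v11 v12 v21 v22 d) \<noteq> 0"
      by (simp_all add: eval3_reflect_simps eval3_polyh_reflect)
    with dvd show False
      using eval3_eq_0_if_dvd by blast
  qed
next
  assume "v21^2 + v22^2 = 0 \<or> (v21 = 0 \<and> v11^2 = d^2)"
  then have "polyL2 v21 v22 dvd polyf2 * (polyL1 v11 v12^2 - cst (d^2) * polyf1)"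
    using polyL2_dvd_polyf2 polyL2_dvd_polyL1_sq_diff assms(1) by fastforce
  then show "polyL2 v21 v22 dvd polyh v11 v12 v21 v22 d"
    unfolding polyh_eq_h_form h_form_swap[of "polyL1 v11 v12"] by (rule dvd_h_form_if_dvd)
qed

theorem lemma8p3:
  fixes v11 v12 v21 v22 d :: complex
  assumes "(v11, v12) \<noteq> (0, 0)" and "(v21, v22) \<noteq> (0, 0)" and "d \<noteq> 0"
  defines "c1 \<equiv> v11^2 + v12^2 \<noteq> 0 \<and> v21^2 + v22^2 \<noteq> 0"
    and "c2 \<equiv> v21 \<noteq> 0 \<or> v11^2 - d^2 \<noteq> 0"
    and "c3 \<equiv> v11 \<noteq> 0 \<or> v21^2 - d^2 \<noteq> 0"
  shows "(c1 \<and> c2 \<and> c3 \<longrightarrow>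
            \<not> polyL1 v11 v12 dvd polyh v11 v12 v21 v22 d \<and>
            \<not> polyL2 v21 v22 dvd polyh v11 v12 v21 v22 d)
       \<and> (\<not> c1 \<or> \<not> c2 \<or> \<not> c3 \<longrightarrow>
            polyL1 v11 v12 dvd polyh v11 v12 v21 v22 d \<or>
            polyL2 v21 v22 dvd polyh v11 v12 v21 v22 d)"
  unfolding c1_def c2_def c3_def polyL1_dvd_polyh_iff[OF assms(1,3)] polyL2_dvd_polyh_iff[OF assms(2,3)]
  by auto

end
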